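(* Let $(a_i),(b_i)$ be finitely supported integer sequences, neither identically zero, and $q_i=a_i-b_i$. The following are equivalent. (1) With $q_\mu$ the lowest-index nonzero $q_i$ and $q_\nu$ the highest-index nonzero $q_i$: (a) $a_l=0$ for $l<\mu$ and $l\ge\nu$; (b) $a_\mu=q_\mu>0$; (c) $\sum_iq_i=0$; (d) $\max(q_l,0)\le a_l\le\sum_{i\le l}q_i$ for all integers $l$. (2) With $a_\mu$ the lowest-index nonzero $a_i$ and $b_\nu$ the highest-index nonzero $b_i$: (a) all $a_i,b_i\ge0$; (b) $a_l=0$ for $l\ge\nu$ and $b_l=0$ for $l\le\mu$; (c) $\sum_ia_i=\sum_ib_i$; (d) $\sum_{i\le l}b_i\le\sum_{i<l}a_i$ for all integers $l$. (3) With $m=\sum a_i$, $n=\sum b_i$: (a) all $a_i,b_i\ge0$; (b) $m=n$; (c) for all $1\le\alpha\le m$, $1\le\beta\le n$ with $\beta\ge\alpha$, $S(a)_\alpha<S(b)_\beta$.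
   Context: For a finitely supported sequence $(c_i)$ of non-negative integers, $S(c)$ is the nondecreasing sequence of length $\sum_ic_i$, indexed from $1$, in which each integer $i$ appears exactly $c_i$ times. *)

theory Defs
  imports Main
begin

definition supp :: "(int \<Rightarrow> int) \<Rightarrow> int set" where
  "supp c = {i. c i \<noteq> 0}"

definition tsum :: "(int \<Rightarrow> int) \<Rightarrow> int" where
  "tsum c = sum c (supp c)"

definition psum_le :: "(int \<Rightarrow> int) \<Rightarrow> int \<Rightarrow> int" where
  "psum_le c l = sum c {i \<in> supp c. i \<le> l}"

definition psum_lt :: "(int \<Rightarrow> int) \<Rightarrow> int \<Rightarrow> int" where
  "psum_lt c l = sum c {i \<in> supp c. i < l}"

text \<open>S(c): the nondecreasing list in which each i appears c_i times
  (for nonnegative c; its length is then the total sum). Indexed from 0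
  as an Isabelle list, so the paper's S(c)_alpha is Sseq c ! (alpha - 1).\<close>
definition Sseq :: "(int \<Rightarrow> int) \<Rightarrow> int list" where
  "Sseq c = concat (map (\<lambda>i. replicate (nat (c i)) i) (sorted_list_of_set (supp c)))"

end

theory Submission
  imports Defs
begin

(* Conditions (1) and (2) are the same statement written in terms of q = a - b versus a and b:
   the extreme indices of supp q are Min (supp a) and Max (supp b), and
   psum_le q l = psum_lt a l + a l - psum_le b l turns (1d) into (2d).
   For (2) <-> (3), S(c) is sorted and has exactly psum_le c l entries <= l and psum_lt c l
   entries < l, so the pointwise comparison S(a)_k < S(b)_k for all k is equivalent to (2d);
   sortedness of S(b) extends it to all beta >= alpha. Finally (2d) at l = Min (supp a) and
   at l = Max (supp b) already forces the support conditions (2b). *)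

definition difference_condition :: "(int \<Rightarrow> int) \<Rightarrow> (int \<Rightarrow> int) \<Rightarrow> bool" where
  "difference_condition a q \<longleftrightarrow>
     supp q \<noteq> {} \<and>
      (let \<mu> = Min (supp q); \<nu> = Max (supp q) in
        (\<forall>l. l < \<mu> \<or> l \<ge> \<nu> \<longrightarrow> a l = 0) \<and>
        a \<mu> = q \<mu> \<and> q \<mu> > 0 \<and>
        tsum q = 0 \<and>
        (\<forall>l. max (q l) 0 \<le> a l \<and> a l \<le> psum_le q l))"

definition partial_sum_condition :: "(int \<Rightarrow> int) \<Rightarrow> (int \<Rightarrow> int) \<Rightarrow> bool" where
  "partial_sum_condition a b \<longleftrightarrow>
     (\<forall>i. a i \<ge> 0 \<and> b i \<ge> 0) \<and>
      (let \<mu> = Min (supp a); \<nu> = Max (supp b) in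
        (\<forall>l. l \<ge> \<nu> \<longrightarrow> a l = 0) \<and> (\<forall>l. l \<le> \<mu> \<longrightarrow> b l = 0) \<and>
        tsum a = tsum b \<and>
        (\<forall>l. psum_le b l \<le> psum_lt a l))"

definition Sseq_condition :: "(int \<Rightarrow> int) \<Rightarrow> (int \<Rightarrow> int) \<Rightarrow> bool" where
  "Sseq_condition a b \<longleftrightarrow>
     (\<forall>i. a i \<ge> 0 \<and> b i \<ge> 0) \<and>
      tsum a = tsum b \<and>
      (\<forall>\<alpha> \<beta>. 1 \<le> \<alpha> \<and> \<alpha> \<le> tsum a \<and> 1 \<le> \<beta> \<and> \<beta> \<le> tsum b \<and> \<beta> \<ge> \<alpha> \<longrightarrow>
         Sseq a ! nat (\<alpha> - 1) < Sseq b ! nat (\<beta> - 1))"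

section \<open>Finitely supported sequences\<close>

lemma in_supp_iff: "i \<in> supp c \<longleftrightarrow> c i \<noteq> 0"
  by (simp add: supp_def)

lemma sum_filter_supp_eq:
  assumes "finite U" "supp c \<subseteq> U"
  shows "sum c {i \<in> supp c. P i} = sum c {i \<in> U. P i}"
  by (rule sum.mono_neutral_left) (use assms in \<open>auto simp: in_supp_iff\<close>)

lemma finite_supp_diff:
  "finite (supp a) \<Longrightarrow> finite (supp b) \<Longrightarrow> finite (supp (\<lambda>i. a i - b i))"
  by (rule finite_subset[of _ "supp a \<union> supp b"]) (auto simp: in_supp_iff)

lemma
  assumes fa: "finite (supp a)" and fb: "finite (supp b)"
  shows tsum_diff: "tsum (\<lambda>i. a i - b i) = tsum a - tsum b"
    and psum_le_diff: "psum_le (\<lambda>i. a i - b i) l = psum_le a l - psum_le b l"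
proof -
  let ?U = "supp a \<union> supp b"
  have U: "finite ?U" "supp a \<subseteq> ?U" "supp b \<subseteq> ?U" "supp (\<lambda>i. a i - b i) \<subseteq> ?U"
    using fa fb by (auto simp: in_supp_iff)
  show "tsum (\<lambda>i. a i - b i) = tsum a - tsum b"
    using sum_filter_supp_eq[OF U(1) U(2), of "\<lambda>_. True"]
      sum_filter_supp_eq[OF U(1) U(3), of "\<lambda>_. True"]
      sum_filter_supp_eq[OF U(1) U(4), of "\<lambda>_. True"]
    by (simp add: tsum_def sum_subtractf)
  show "psum_le (\<lambda>i. a i - b i) l = psum_le a l - psum_le b l"
    using sum_filter_supp_eq[OF U(1) U(2), of "\<lambda>i. i \<le> l"]
      sum_filter_supp_eq[OF U(1) U(3), of "\<lambda>i. i \<le> l"]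
      sum_filter_supp_eq[OF U(1) U(4), of "\<lambda>i. i \<le> l"]
    by (simp add: psum_le_def sum_subtractf)
qed

lemma psum_le_eq_psum_lt_add:
  assumes "finite (supp c)"
  shows "psum_le c l = psum_lt c l + c l"
proof (cases "c l = 0")
  case True
  then have "{i \<in> supp c. i \<le> l} = {i \<in> supp c. i < l}"
    by (auto simp: le_less in_supp_iff)
  then show ?thesis using True by (simp add: psum_le_def psum_lt_def)
next
  case False
  then have "{i \<in> supp c. i \<le> l} = insert l {i \<in> supp c. i < l}"
    by (auto simp: le_less in_supp_iff)
  then show ?thesis using assms by (simp add: psum_le_def psum_lt_def)
qed

lemma member_le_psum_le:
  assumes "finite (supp c)" "\<And>i. 0 \<le> c i" "l \<le> m"
  shows "c l \<le> psum_le c m"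
proof (cases "c l = 0")
  case True
  then show ?thesis using assms(2) by (simp add: psum_le_def sum_nonneg)
next
  case False
  then have "l \<in> {i \<in> supp c. i \<le> m}" using assms(3) by (simp add: in_supp_iff)
  moreover have "finite {i \<in> supp c. i \<le> m}" using assms(1) by simp
  ultimately show ?thesis unfolding psum_le_def by (metis member_le_sum assms(2))
qed

lemma psum_lt_le_tsum_diff:
  assumes "finite (supp c)" "\<And>i. 0 \<le> c i" "m \<le> l"
  shows "psum_lt c m \<le> tsum c - c l"
proof -
  have "{i \<in> supp c. i < m} \<subseteq> supp c - {l}" using assms(3) by auto
  then have "psum_lt c m \<le> sum c (supp c - {l})" unfolding psum_lt_def
    using assms(1,2) by (intro sum_mono2) auto
  also have "\<dots> = tsum c - c l"
    using assms(1) by (simp add: tsum_def sum_diff1 in_supp_iff)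
  finally show ?thesis .
qed

lemma psum_lt_Min_supp:
  assumes "finite (supp c)"
  shows "psum_lt c (Min (supp c)) = 0"
proof -
  have "{i \<in> supp c. i < Min (supp c)} = {}"
    using Min_le[OF assms] leD by blast
  then show ?thesis unfolding psum_lt_def by (metis sum.empty)
qed

lemma psum_le_Max_supp:
  assumes "finite (supp c)"
  shows "psum_le c (Max (supp c)) = tsum c"
proof -
  have "{i \<in> supp c. i \<le> Max (supp c)} = supp c"
    using Max_ge[OF assms] by auto
  then show ?thesis by (simp add: psum_le_def tsum_def)
qed

lemma zero_if_less_Min_supp: "finite (supp c) \<Longrightarrow> l < Min (supp c) \<Longrightarrow> c l = 0"
  by (metis Min_le in_supp_iff not_le)

lemma zero_if_Max_supp_less: "finite (supp c) \<Longrightarrow> Max (supp c) < l \<Longrightarrow> c l = 0"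
  by (metis Max_ge in_supp_iff not_le)

lemma Min_supp_eqI:
  "finite (supp c) \<Longrightarrow> c m \<noteq> 0 \<Longrightarrow> (\<And>l. l < m \<Longrightarrow> c l = 0) \<Longrightarrow> Min (supp c) = m"
  by (metis Min_eqI in_supp_iff not_le)

lemma Max_supp_eqI:
  "finite (supp c) \<Longrightarrow> c m \<noteq> 0 \<Longrightarrow> (\<And>l. m < l \<Longrightarrow> c l = 0) \<Longrightarrow> Max (supp c) = m"
  by (metis Max_eqI in_supp_iff not_le)

section \<open>Sorted lists\<close>

lemma sorted_nth_downclosed_iff:
  assumes "sorted xs" "i < length xs" and down: "\<And>x y. x \<le> y \<Longrightarrow> P y \<Longrightarrow> P x"
  shows "P (xs ! i) \<longleftrightarrow> i < length (filter P xs)"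
  using assms(1,2)
proof (induction xs arbitrary: i)
  case Nil
  then show ?case by simp
next
  case (Cons x ys)
  show ?case
  proof (cases "P x")
    case True
    then show ?thesis using Cons by (cases i) auto
  next
    case False
    have "\<not> P y" if "y \<in> set (x # ys)" for y
      using that Cons.prems(1) False down by auto
    then show ?thesis using nth_mem[OF Cons.prems(2)] by (auto simp: filter_empty_conv)
  qed
qed

lemma sorted_nth_less_iff_length_filter:
  fixes xs ys :: "'a :: linorder list"
  assumes sx: "sorted xs" and sy: "sorted ys" and len: "length xs = length ys"
  shows "(\<forall>k < length xs. xs ! k < ys ! k) \<longleftrightarrow>
    (\<forall>l. length (filter (\<lambda>y. y \<le> l) ys) \<le> length (filter (\<lambda>x. x < l) xs))"
proof
  assume less: "\<forall>k < length xs. xs ! k < ys ! k"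
  show "\<forall>l. length (filter (\<lambda>y. y \<le> l) ys) \<le> length (filter (\<lambda>x. x < l) xs)"
  proof
    fix l
    show "length (filter (\<lambda>y. y \<le> l) ys) \<le> length (filter (\<lambda>x. x < l) xs)"
    proof (cases "length (filter (\<lambda>y. y \<le> l) ys)")
      case (Suc k)
      then have k: "k < length xs"
        using len length_filter_le[of "\<lambda>y. y \<le> l" ys] by simp
      then have "ys ! k \<le> l"
        using sorted_nth_downclosed_iff[OF sy, of k "\<lambda>y. y \<le> l"] len Suc by simp
      then have "xs ! k < l" using less k by force
      then show ?thesis
        using sorted_nth_downclosed_iff[OF sx k, of "\<lambda>x. x < l"] Suc by simp
    qed simp
  qed
next
  assume count: "\<forall>l. length (filter (\<lambda>y. y \<le> l) ys) \<le> length (filter (\<lambda>x. x < l) xs)"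
  show "\<forall>k < length xs. xs ! k < ys ! k"
  proof (intro allI impI)
    fix k assume k: "k < length xs"
    have "k < length (filter (\<lambda>y. y \<le> ys ! k) ys)"
      using sorted_nth_downclosed_iff[OF sy, of k "\<lambda>y. y \<le> ys ! k"] k len by simp
    then have "k < length (filter (\<lambda>x. x < ys ! k) xs)"
      using count le_trans not_le by blast
    then show "xs ! k < ys ! k"
      using sorted_nth_downclosed_iff[OF sx k, of "\<lambda>x. x < ys ! k"] by simp
  qed
qed

lemma sorted_nth_less_iff_all_pairs:
  assumes "sorted ys" "length xs = length ys"
  shows "(\<forall>k < length xs. xs ! k < ys ! k) \<longleftrightarrow>
    (\<forall>i j. i \<le> j \<and> j < length xs \<longrightarrow> xs ! i < ys ! j)"
  using assms by (metis order.strict_trans2 sorted_nth_mono le_less_trans order_refl)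

lemma all_index_pairs_int_iff:
  "(\<forall>\<alpha> \<beta>. 1 \<le> \<alpha> \<and> \<alpha> \<le> int M \<and> 1 \<le> \<beta> \<and> \<beta> \<le> int M \<and> \<beta> \<ge> \<alpha> \<longrightarrow>
      P (nat (\<alpha> - 1)) (nat (\<beta> - 1)))
    \<longleftrightarrow> (\<forall>i j. i \<le> j \<and> j < M \<longrightarrow> P i j)" (is "?int \<longleftrightarrow> ?nat")
proof
  assume ?int
  show ?nat
  proof (intro allI impI)
    fix i j assume "i \<le> j \<and> j < M"
    then show "P i j" using \<open>?int\<close>[rule_format, of "int i + 1" "int j + 1"] by simp
  qed
next
  assume ?nat
  then show ?int by (simp add: nat_mono nat_less_iff)
qed

section \<open>The sequence S(c)\<close>

lemma sorted_concat_replicate: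
  "sorted xs \<Longrightarrow> sorted (concat (map (\<lambda>i. replicate (n i) i) xs))"
  by (induction xs) (auto simp: sorted_append)

lemma length_filter_concat_replicate:
  "length (filter P (concat (map (\<lambda>i. replicate (n i) i) xs))) =
    (\<Sum>i\<leftarrow>xs. if P i then n i else 0)"
  by (induction xs) auto

lemma sorted_Sseq: "sorted (Sseq c)"
  unfolding Sseq_def by (rule sorted_concat_replicate) simp

lemma length_filter_Sseq:
  assumes fin: "finite (supp c)" and nonneg: "\<And>i. 0 \<le> c i"
  shows "int (length (filter P (Sseq c))) = sum c {i \<in> supp c. P i}"
proof -
  have "length (filter P (Sseq c)) = (\<Sum>i\<in>supp c. if P i then nat (c i) else 0)"
    unfolding Sseq_def length_filter_concat_replicate
    using fin by (simp add: sum_list_distinct_conv_sum_set)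
  then have "int (length (filter P (Sseq c))) = (\<Sum>i\<in>supp c. if P i then c i else 0)"
    by (simp add: of_nat_sum) (use nonneg in \<open>intro sum.cong, auto\<close>)
  also have "\<dots> = sum c {i \<in> supp c. P i}"
    using fin by (simp add: sum.inter_filter)
  finally show ?thesis .
qed

lemma length_Sseq:
  "finite (supp c) \<Longrightarrow> (\<And>i. 0 \<le> c i) \<Longrightarrow> int (length (Sseq c)) = tsum c"
  using length_filter_Sseq[of c "\<lambda>_. True"] by (simp add: tsum_def)

lemma Sseq_nth_less_iff_psum:
  assumes fa: "finite (supp a)" and fb: "finite (supp b)"
    and nna: "\<And>i. 0 \<le> a i" and nnb: "\<And>i. 0 \<le> b i" and eq: "tsum a = tsum b"
  shows "(\<forall>k < length (Sseq a). Sseq a ! k < Sseq b ! k) \<longleftrightarrow>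
    (\<forall>l. psum_le b l \<le> psum_lt a l)"
proof -
  have len: "length (Sseq a) = length (Sseq b)"
    using length_Sseq[OF fa nna] length_Sseq[OF fb nnb] eq by simp
  have "int (length (filter (\<lambda>y. y \<le> l) (Sseq b))) = psum_le b l"
    and "int (length (filter (\<lambda>x. x < l) (Sseq a))) = psum_lt a l" for l
    using length_filter_Sseq[OF fb nnb] length_filter_Sseq[OF fa nna]
    by (simp_all add: psum_le_def psum_lt_def)
  then show ?thesis
    using sorted_nth_less_iff_length_filter[OF sorted_Sseq sorted_Sseq len]
    by (metis of_nat_le_iff)
qed

section \<open>The three conditions\<close>

lemma psum_dominance_zero_outside:
  assumes fa: "finite (supp a)" and fb: "finite (supp b)"
    and nna: "\<And>i. 0 \<le> a i" and nnb: "\<And>i. 0 \<le> b i" and eq: "tsum a = tsum b"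
    and dom: "\<And>l. psum_le b l \<le> psum_lt a l"
  shows "l \<le> Min (supp a) \<Longrightarrow> b l = 0" and "Max (supp b) \<le> l \<Longrightarrow> a l = 0"
proof -
  show "b l = 0" if "l \<le> Min (supp a)"
    using member_le_psum_le[OF fb nnb that] dom[of "Min (supp a)"] psum_lt_Min_supp[OF fa]
      nnb[of l]
    by linarith
  show "a l = 0" if "Max (supp b) \<le> l"
    using psum_lt_le_tsum_diff[OF fa nna that] dom[of "Max (supp b)"] psum_le_Max_supp[OF fb]
      eq nna[of l]
    by linarith
qed

lemma difference_condition_imp_partial_sum_condition:
  assumes fa: "finite (supp a)" and fb: "finite (supp b)"
    and cond: "difference_condition a (\<lambda>i. a i - b i)"
  shows "partial_sum_condition a b"
proof -
  define q where "q = (\<lambda>i. a i - b i)"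
  define \<mu> where "\<mu> = Min (supp q)"
  define \<nu> where "\<nu> = Max (supp q)"
  have fq: "finite (supp q)" unfolding q_def using fa fb by (rule finite_supp_diff)
  have ne: "supp q \<noteq> {}"
    and a_out: "\<And>l. l < \<mu> \<or> l \<ge> \<nu> \<Longrightarrow> a l = 0" and a_\<mu>: "a \<mu> = q \<mu>" "q \<mu> > 0"
    and tsum_q: "tsum q = 0" and bounds: "\<And>l. max (q l) 0 \<le> a l \<and> a l \<le> psum_le q l"
    using cond unfolding difference_condition_def q_def[symmetric] \<mu>_def \<nu>_def Let_def
    by auto
  have nonneg: "0 \<le> a i \<and> 0 \<le> b i" for i
    using bounds[of i] by (auto simp: q_def)
  have "Min (supp a) = \<mu>"
    using fa a_\<mu> a_out by (intro Min_supp_eqI) auto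
  moreover have "Max (supp b) = \<nu>"
  proof (rule Max_supp_eqI[OF fb])
    show "b \<nu> \<noteq> 0"
      using Max_in[OF fq ne] a_out[of \<nu>] by (simp add: q_def \<nu>_def in_supp_iff)
    show "b l = 0" if "\<nu> < l" for l
    proof -
      have "q l = 0" using zero_if_Max_supp_less[OF fq] that unfolding \<nu>_def by blast
      then show ?thesis using a_out[of l] that by (simp add: q_def)
    qed
  qed
  moreover have "b l = 0" if "l \<le> \<mu>" for l
    using that zero_if_less_Min_supp[OF fq, of l] a_out[of l] a_\<mu>
    by (cases "l = \<mu>") (auto simp: q_def \<mu>_def)
  moreover have "tsum a = tsum b"
    using tsum_q tsum_diff[OF fa fb] by (simp add: q_def)
  moreover have "psum_le b l \<le> psum_lt a l" for l
    using bounds[of l] psum_le_diff[OF fa fb] psum_le_eq_psum_lt_add[OF fa, of l]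
    by (simp add: q_def)
  ultimately show ?thesis
    unfolding partial_sum_condition_def Let_def using nonneg a_out by auto
qed

lemma partial_sum_condition_imp_difference_condition:
  assumes fa: "finite (supp a)" and fb: "finite (supp b)"
    and na: "a \<noteq> (\<lambda>_. 0)" and nb: "b \<noteq> (\<lambda>_. 0)"
    and cond: "partial_sum_condition a b"
  shows "difference_condition a (\<lambda>i. a i - b i)"
proof -
  define q where "q = (\<lambda>i. a i - b i)"
  define \<mu> where "\<mu> = Min (supp a)"
  define \<nu> where "\<nu> = Max (supp b)"
  have fq: "finite (supp q)" unfolding q_def using fa fb by (rule finite_supp_diff)
  have nna: "\<And>i. 0 \<le> a i" and nnb: "\<And>i. 0 \<le> b i"
    and a_hi: "\<And>l. l \<ge> \<nu> \<Longrightarrow> a l = 0" and b_lo: "\<And>l. l \<le> \<mu> \<Longrightarrow> b l = 0"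
    and eq: "tsum a = tsum b" and dom: "\<And>l. psum_le b l \<le> psum_lt a l"
    using cond unfolding partial_sum_condition_def \<mu>_def \<nu>_def Let_def by auto
  have a_lo: "a l = 0" if "l < \<mu>" for l
    using zero_if_less_Min_supp[OF fa] that unfolding \<mu>_def by blast
  have b_hi: "b l = 0" if "\<nu> < l" for l
    using zero_if_Max_supp_less[OF fb] that unfolding \<nu>_def by blast
  have "supp a \<noteq> {}" "supp b \<noteq> {}" using na nb by (auto simp: supp_def)
  then have a_\<mu>: "a \<mu> > 0" and b_\<nu>: "b \<nu> > 0"
    using Min_in[OF fa] Max_in[OF fb] nna[of \<mu>] nnb[of \<nu>] unfolding \<mu>_def \<nu>_def
    by (auto simp: in_supp_iff order_le_less)
  have q_\<mu>: "q \<mu> = a \<mu>" using b_lo by (simp add: q_def)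
  have Min_q: "Min (supp q) = \<mu>"
    using fq q_\<mu> a_\<mu> a_lo b_lo by (intro Min_supp_eqI) (auto simp: q_def)
  have Max_q: "Max (supp q) = \<nu>"
    using fq a_hi b_\<nu> b_hi by (intro Max_supp_eqI) (auto simp: q_def)
  have "\<mu> \<in> supp q" using q_\<mu> a_\<mu> by (simp add: in_supp_iff)
  then have "supp q \<noteq> {}" by blast
  moreover have "tsum q = 0" using tsum_diff[OF fa fb] eq by (simp add: q_def)
  moreover have "max (q l) 0 \<le> a l \<and> a l \<le> psum_le q l" for l
    using nna[of l] nnb[of l] dom[of l] psum_le_diff[OF fa fb]
      psum_le_eq_psum_lt_add[OF fa, of l]
    by (simp add: q_def)
  ultimately show ?thesis
    unfolding difference_condition_def q_def[symmetric] Let_def Min_q Max_q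
    using a_lo a_hi q_\<mu> a_\<mu> by auto
qed

lemma partial_sum_condition_iff_Sseq_condition:
  assumes fa: "finite (supp a)" and fb: "finite (supp b)"
  shows "partial_sum_condition a b \<longleftrightarrow> Sseq_condition a b"
proof (cases "(\<forall>i. a i \<ge> 0 \<and> b i \<ge> 0) \<and> tsum a = tsum b")
  case False
  then show ?thesis by (auto simp: partial_sum_condition_def Sseq_condition_def)
next
  case True
  then have nna: "\<And>i. 0 \<le> a i" and nnb: "\<And>i. 0 \<le> b i" and eq: "tsum a = tsum b" by auto
  define M where "M = length (Sseq a)"
  have M: "int M = tsum a" "length (Sseq b) = M"
    using length_Sseq[OF fa nna] length_Sseq[OF fb nnb] eq by (simp_all add: M_def)
  have "partial_sum_condition a b \<longleftrightarrow> (\<forall>l. psum_le b l \<le> psum_lt a l)"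
    using True psum_dominance_zero_outside[OF fa fb nna nnb eq]
    unfolding partial_sum_condition_def Let_def by blast
  also have "\<dots> \<longleftrightarrow> (\<forall>k < M. Sseq a ! k < Sseq b ! k)"
    using Sseq_nth_less_iff_psum[OF fa fb nna nnb eq] by (simp add: M_def)
  also have "\<dots> \<longleftrightarrow> (\<forall>i j. i \<le> j \<and> j < M \<longrightarrow> Sseq a ! i < Sseq b ! j)"
    using sorted_nth_less_iff_all_pairs[OF sorted_Sseq[of b], of "Sseq a"] M(2)
    by (simp add: M_def)
  also have "\<dots> \<longleftrightarrow> Sseq_condition a b"
    using True all_index_pairs_int_iff[of M "\<lambda>i j. Sseq a ! i < Sseq b ! j"]
    unfolding Sseq_condition_def eq[symmetric] M(1)[symmetric] by simp
  finally show ?thesis .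
qed

theorem mainTheorem14:
  fixes a b :: "int \<Rightarrow> int"
  assumes fa: "finite (supp a)" and fb: "finite (supp b)"
    and na: "a \<noteq> (\<lambda>_. 0)" and nb: "b \<noteq> (\<lambda>_. 0)"
  defines "q \<equiv> (\<lambda>i. a i - b i)"
  shows
   "((supp q \<noteq> {} \<and>
      (let \<mu> = Min (supp q); \<nu> = Max (supp q) in
        (\<forall>l. l < \<mu> \<or> l \<ge> \<nu> \<longrightarrow> a l = 0) \<and>
        a \<mu> = q \<mu> \<and> q \<mu> > 0 \<and>
        tsum q = 0 \<and>
        (\<forall>l. max (q l) 0 \<le> a l \<and> a l \<le> psum_le q l)))
    \<longleftrightarrow>
     ((\<forall>i. a i \<ge> 0 \<and> b i \<ge> 0) \<and>
      (let \<mu> = Min (supp a); \<nu> = Max (supp b) in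
        (\<forall>l. l \<ge> \<nu> \<longrightarrow> a l = 0) \<and> (\<forall>l. l \<le> \<mu> \<longrightarrow> b l = 0) \<and>
        tsum a = tsum b \<and>
        (\<forall>l. psum_le b l \<le> psum_lt a l))))
  \<and>
   (((\<forall>i. a i \<ge> 0 \<and> b i \<ge> 0) \<and>
      (let \<mu> = Min (supp a); \<nu> = Max (supp b) in
        (\<forall>l. l \<ge> \<nu> \<longrightarrow> a l = 0) \<and> (\<forall>l. l \<le> \<mu> \<longrightarrow> b l = 0) \<and>
        tsum a = tsum b \<and>
        (\<forall>l. psum_le b l \<le> psum_lt a l)))
    \<longleftrightarrow>
     ((\<forall>i. a i \<ge> 0 \<and> b i \<ge> 0) \<and>
      tsum a = tsum b \<and>
      (\<forall>\<alpha> \<beta>. 1 \<le> \<alpha> \<and> \<alpha> \<le> tsum a \<and> 1 \<le> \<beta> \<and> \<beta> \<le> tsum b \<and> \<beta> \<ge> \<alpha> \<longrightarrow>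
         Sseq a ! nat (\<alpha> - 1) < Sseq b ! nat (\<beta> - 1))))"
proof -
  have "difference_condition a q \<longleftrightarrow> partial_sum_condition a b"
    unfolding q_def
    using difference_condition_imp_partial_sum_condition[OF fa fb]
      partial_sum_condition_imp_difference_condition[OF fa fb na nb] by blast
  moreover have "partial_sum_condition a b \<longleftrightarrow> Sseq_condition a b"
    using fa fb by (rule partial_sum_condition_iff_Sseq_condition)
  ultimately show ?thesis
    unfolding difference_condition_def partial_sum_condition_def Sseq_condition_def
    by (rule conjI)
qed

end
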